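(* Let $\mathcal{F}$ be a complete fan in $\mathbb{R}^d$ and $R_0$ a region of $\mathcal{F}$. Then $\mathcal{F}$ is inscribable if and only if $\mathcal{F}$ is virtually inscribable and there is $v_0\in\mathrm{InSpc}(\mathcal{F},R_0)$ such that for every region $R$ of $\mathcal{F}$ one has $t_{\mathcal{W}}(v_0)\in\operatorname{int}(R)$ for some path $\mathcal{W}$ in $G(\mathcal{F})$ from $R_0$ to $R$.
   Context: A fan is a nonempty collection of polyhedral cones closed under taking faces and intersections; it is complete if its union is $\mathbb{R}^d$. Regions are the inclusion-maximal cones; walls are cones of dimension $d-1$. All cones share a lineality space $\mathrm{lineal}(\mathcal{F})$. The dual graph $G(\mathcal{F})$ has the regions as nodes, with $R,R'$ adjacent if $R\cap R'$ is a wall; then $s_{RR'}$ denotes the orthogonal reflection in the hyperplane $\mathrm{lin}(R\cap R')$. For a walk $\mathcal{W}=R_0R_1\cdots R_k$ set $t_{\mathcal{W}}=s_{R_kR_{k-1}}\cdots s_{R_2R_1}s_{R_1R_0}$. The fan is virtually inscribable if there exists $v\in\mathbb{R}^d\setminus\mathrm{lineal}(\mathcal{F})$ with $t_{\mathcal{W}}(v)=v$ for all closed walks $\mathcal{W}$ starting at $R_0$. The based inscribed space $\mathrm{InSpc}(\mathcal{F},R_0)$ is the linear subspace of all $v\in\mathrm{lineal}(\mathcal{F})^\perp$ with $t_{\mathcal{W}}(v)=v$ for all closed walks $\mathcal{W}$ starting at $R_0$. The fan $\mathcal{F}$ is inscribable if there is an inscribed polytope (vertices on a common sphere) whose normal fan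 is $\mathcal{F}$. *)

theory Defs
  imports "HOL-Analysis.Analysis"
begin

definition polyhedral_cone :: "'a::euclidean_space set \<Rightarrow> bool" where
  "polyhedral_cone C \<longleftrightarrow> polyhedron C \<and> cone C \<and> C \<noteq> {}"

definition is_fan :: "'a::euclidean_space set set \<Rightarrow> bool" where
  "is_fan F \<longleftrightarrow> F \<noteq> {} \<and> finite F \<and> (\<forall>C\<in>F. polyhedral_cone C)
     \<and> (\<forall>C\<in>F. \<forall>G. G face_of C \<and> G \<noteq> {} \<longrightarrow> G \<in> F)
     \<and> (\<forall>C\<in>F. \<forall>D\<in>F. (C \<inter> D) face_of C \<and> (C \<inter> D) face_of D)"

definition complete_fan :: "'a::euclidean_space set set \<Rightarrow> bool" where
  "complete_fan F \<longleftrightarrow> is_fan F \<and> \<Union>F = UNIV"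

definition regions :: "'a::euclidean_space set set \<Rightarrow> 'a set set" where
  "regions F = {R \<in> F. \<forall>C\<in>F. R \<subseteq> C \<longrightarrow> C = R}"

definition is_wall :: "'a::euclidean_space set \<Rightarrow> bool" where
  "is_wall C \<longleftrightarrow> aff_dim C = int DIM('a) - 1"

definition lineality :: "'a::euclidean_space set \<Rightarrow> 'a set" where
  "lineality C = {x. x \<in> C \<and> - x \<in> C}"

definition lineal :: "'a::euclidean_space set set \<Rightarrow> 'a set" where
  "lineal F = (\<Inter>C\<in>F. lineality C)"

definition adjacent :: "'a::euclidean_space set set \<Rightarrow> 'a set \<Rightarrow> 'a set \<Rightarrow> bool" where
  "adjacent F R R' \<longleftrightarrow> R \<in> regions F \<and> R' \<in> regions F \<and> is_wall (R \<inter> R')"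

definition reflect :: "'a::euclidean_space set \<Rightarrow> 'a \<Rightarrow> 'a" where
  "reflect L x = (THE y. (1/2) *\<^sub>R (x + y) \<in> L \<and> (\<forall>z\<in>L. inner (x - y) z = 0))"

definition wall_reflection :: "'a::euclidean_space set \<Rightarrow> 'a set \<Rightarrow> 'a \<Rightarrow> 'a" where
  "wall_reflection R R' = reflect (span (R \<inter> R'))"

definition is_walk :: "'a::euclidean_space set set \<Rightarrow> 'a set list \<Rightarrow> bool" where
  "is_walk F W \<longleftrightarrow> W \<noteq> [] \<and> set W \<subseteq> regions F
     \<and> (\<forall>i. Suc i < length W \<longrightarrow> adjacent F (W ! i) (W ! Suc i))"

definition is_path :: "'a::euclidean_space set set \<Rightarrow> 'a set list \<Rightarrow> bool" where
  "is_path F W \<longleftrightarrow> is_walk F W \<and> distinct W"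

definition closed_walk_at :: "'a::euclidean_space set set \<Rightarrow> 'a set \<Rightarrow> 'a set list \<Rightarrow> bool" where
  "closed_walk_at F R0 W \<longleftrightarrow> is_walk F W \<and> hd W = R0 \<and> last W = R0"

text \<open>t_W = s_{R_k R_{k-1}} \<circ> ... \<circ> s_{R_2 R_1} \<circ> s_{R_1 R_0}.\<close>
fun walk_map :: "'a::euclidean_space set list \<Rightarrow> 'a \<Rightarrow> 'a" where
  "walk_map (R # R' # Rs) = walk_map (R' # Rs) \<circ> wall_reflection R' R"
| "walk_map _ = id"

definition virtually_inscribable :: "'a::euclidean_space set set \<Rightarrow> 'a set \<Rightarrow> bool" where
  "virtually_inscribable F R0 \<longleftrightarrow>
     (\<exists>v. v \<notin> lineal F \<and> (\<forall>W. closed_walk_at F R0 W \<longrightarrow> walk_map W v = v))"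

definition InSpc :: "'a::euclidean_space set set \<Rightarrow> 'a set \<Rightarrow> 'a set" where
  "InSpc F R0 = {v. v \<in> orthogonal_comp (lineal F)
                    \<and> (\<forall>W. closed_walk_at F R0 W \<longrightarrow> walk_map W v = v)}"

definition normal_cone :: "'a::euclidean_space set \<Rightarrow> 'a set \<Rightarrow> 'a set" where
  "normal_cone P G = {c. \<forall>x\<in>G. \<forall>y\<in>P. inner c y \<le> inner c x}"

definition normal_fan :: "'a::euclidean_space set \<Rightarrow> 'a set set" where
  "normal_fan P = {normal_cone P G | G. G face_of P \<and> G \<noteq> {}}"

definition inscribed_polytope :: "'a::euclidean_space set \<Rightarrow> bool" where
  "inscribed_polytope P \<longleftrightarrow> polytope P \<and>
     (\<exists>c r. {v. v extreme_point_of P} \<subseteq> sphere c r)"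

definition inscribable :: "'a::euclidean_space set set \<Rightarrow> bool" where
  "inscribable F \<longleftrightarrow> (\<exists>P. inscribed_polytope P \<and> normal_fan P = F)"

end

theory Submission
  imports Defs
begin

(* Let P be an inscribed polytope with normal fan F. Choose the centre of its sphere in the affine
   hull of P and translate it to the origin. Each region is the normal cone of a vertex, and that
   vertex lies in the interior of its own normal cone. The wall between the normal cones of two
   vertices u, v spans the hyperplane orthogonal to u - v, and since |u| = |v| the reflection in it
   swaps u and v. So t_W carries the vertex of R0 to the vertex of the last region of W. That
   vertex is fixed by closed walks and orthogonal to the lineality space, and it is nonzero, since
   otherwise 0 would be interior to R0 and the lineality space would be everything.

   Conversely, a point v0 of InSpc transported along walks gives a well-defined label w(R) for each
   region, and the hypothesis puts w(R) in the interior of R. For x in the interior of R, crossing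
   a wall towards x increases <w(.), x>, so this form is maximal exactly at R. Hence R is the normal
   cone of w(R) in the polytope conv {w(R)}, whose normal fan is therefore F and whose vertices
   all have norm |v0|. *)

section \<open>Reflections\<close>

lemma reflect_eqI:
  assumes L: "subspace L" and mid: "(1/2) *\<^sub>R (x + y) \<in> L"
    and orth: "\<forall>z\<in>L. inner (x - y) z = 0"
  shows "reflect L x = y"
  unfolding reflect_def
proof (rule the_equality)
  show "(1/2) *\<^sub>R (x + y) \<in> L \<and> (\<forall>z\<in>L. inner (x - y) z = 0)" using mid orth by blast
next
  fix y' assume y': "(1/2) *\<^sub>R (x + y') \<in> L \<and> (\<forall>z\<in>L. inner (x - y') z = 0)"
  have "2 *\<^sub>R ((1/2) *\<^sub>R (x + y') - (1/2) *\<^sub>R (x + y)) \<in> L"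
    using y' mid L by (simp add: subspace_diff subspace_scale)
  then have d: "y' - y \<in> L" by (simp add: algebra_simps)
  have "inner (x - y') (y' - y) = 0" "inner (x - y) (y' - y) = 0" using y' orth d by auto
  then have "inner (y' - y) (y' - y) = 0" by (simp add: inner_diff_left)
  then show "y' = y" by simp
qed

lemma reflect_add_orthogonal:
  assumes "subspace L" "y \<in> L" "\<forall>w\<in>L. inner z w = 0"
  shows "reflect L (y + z) = y - z"
  using assms by (intro reflect_eqI) (simp_all add: scaleR_2[symmetric] inner_add_left)

lemma reflect_orthogonal_decomposition:
  assumes L: "subspace L"
  obtains y z where "y \<in> L" "\<forall>w\<in>L. inner z w = 0" "x = y + z" "reflect L x = y - z"
proof -
  obtain y z where y: "y \<in> span L" and z: "\<And>w. w \<in> span L \<Longrightarrow> orthogonal z w" and x: "x = y + z"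
    using orthogonal_subspace_decomp_exists by blast
  have "y \<in> L" using y L by (metis span_eq_iff)
  moreover have "\<forall>w\<in>L. inner z w = 0" using z span_base orthogonal_def by blast
  ultimately show thesis using that x reflect_add_orthogonal[OF L] by blast
qed

lemma reflect_reflect:
  assumes L: "subspace L"
  shows "reflect L (reflect L x) = x"
proof -
  obtain y z where "y \<in> L" "\<forall>w\<in>L. inner z w = 0" "x = y + z" "reflect L x = y - z"
    using reflect_orthogonal_decomposition[OF L] .
  then show ?thesis using reflect_add_orthogonal[OF L, of y "- z"] by simp
qed

lemma norm_reflect:
  assumes L: "subspace L"
  shows "norm (reflect L x) = norm x"
proof -
  obtain y z where "y \<in> L" "\<forall>w\<in>L. inner z w = 0" and x: "x = y + z" and r: "reflect L x = y - z"
    using reflect_orthogonal_decomposition[OF L] .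
  then have yz: "inner y z = 0" by (simp add: inner_commute)
  have "norm (y - z) ^ 2 = norm (y + z) ^ 2"
    by (simp add: power2_norm_eq_inner inner_diff_left inner_diff_right inner_add_left
        inner_add_right yz inner_commute)
  then show ?thesis using r x by (simp add: power2_eq_iff_nonneg)
qed

lemma reflect_hyperplane:
  assumes a: "a \<noteq> 0"
  shows "reflect {x. inner a x = 0} v = v - (2 * inner a v / inner a a) *\<^sub>R a"
proof (rule reflect_eqI[OF subspace_hyperplane])
  have "inner a a \<noteq> 0" using a by simp
  then show "(1/2) *\<^sub>R (v + (v - (2 * inner a v / inner a a) *\<^sub>R a)) \<in> {x. inner a x = 0}"
    by (simp add: inner_add_right inner_diff_right field_simps)
qed simp

lemma reflect_hyperplane_swap:
  assumes "norm a = norm b"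
  shows "reflect {x. inner (a - b) x = 0} a = b"
proof (rule reflect_eqI[OF subspace_hyperplane])
  have "inner (a - b) (a + b) = norm a ^ 2 - norm b ^ 2"
    by (simp add: power2_norm_eq_inner inner_diff_left inner_add_right inner_diff_right inner_commute)
  then show "(1/2) *\<^sub>R (a + b) \<in> {x. inner (a - b) x = 0}" using assms by simp
qed simp

lemma wall_reflection_wall_reflection: "wall_reflection R R' (wall_reflection R' R x) = x"
  unfolding wall_reflection_def by (simp add: Int_commute reflect_reflect)

lemma norm_wall_reflection: "norm (wall_reflection R R' x) = norm x"
  unfolding wall_reflection_def by (simp add: norm_reflect)

section \<open>Walks in the dual graph\<close>

lemma is_walk_singleton: "is_walk F [R] \<longleftrightarrow> R \<in> regions F"
  by (simp add: is_walk_def)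

lemma is_walk_Cons_Cons:
  "is_walk F (R # R' # Rs) \<longleftrightarrow> adjacent F R R' \<and> is_walk F (R' # Rs)"
  by (auto simp: is_walk_def adjacent_def nth_Cons less_Suc_eq_0_disj split: nat.splits)

lemma is_walk_nonempty: "is_walk F W \<Longrightarrow> W \<noteq> []"
  by (simp add: is_walk_def)

lemma is_walk_append:
  "is_walk F xs \<Longrightarrow> is_walk F ys \<Longrightarrow> last xs = hd ys \<Longrightarrow> is_walk F (xs @ tl ys)"
proof (induction xs rule: induct_list012)
  case (2 R)
  then show ?case by (cases ys) (simp_all add: is_walk_def)
next
  case (3 R R' Rs)
  then show ?case by (simp add: is_walk_Cons_Cons)
qed (simp add: is_walk_def)

lemma is_walk_rev: "is_walk F W \<Longrightarrow> is_walk F (rev W)"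
proof (induction W rule: induct_list012)
  case (3 R R' Rs)
  have "is_walk F [R', R]"
    using "3.prems" by (simp add: is_walk_Cons_Cons is_walk_singleton adjacent_def Int_commute)
  moreover have "is_walk F (rev (R' # Rs))" using 3 by (simp add: is_walk_Cons_Cons)
  ultimately show ?case using is_walk_append[of F "rev (R' # Rs)" "[R', R]"] by simp
qed (simp_all add: is_walk_def)

lemma last_append_tl: "ys \<noteq> [] \<Longrightarrow> last xs = hd ys \<Longrightarrow> last (xs @ tl ys) = last ys"
  by (cases ys) auto

lemma walk_map_append:
  "xs \<noteq> [] \<Longrightarrow> last xs = hd ys \<Longrightarrow> walk_map (xs @ tl ys) = walk_map ys \<circ> walk_map xs"
proof (induction xs rule: induct_list012)
  case (2 R)
  then show ?case by (cases ys) auto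
next
  case (3 R R' Rs)
  then show ?case by (simp add: comp_assoc)
qed simp

lemma walk_map_rev: "walk_map (rev W) (walk_map W x) = x"
proof (induction W arbitrary: x rule: induct_list012)
  case (3 R R' Rs)
  have "walk_map (rev (R # R' # Rs)) = walk_map [R', R] \<circ> walk_map (rev (R' # Rs))"
    using walk_map_append[of "rev (R' # Rs)" "[R', R]"] by simp
  then have "walk_map (rev (R # R' # Rs)) (walk_map (R # R' # Rs) x)
      = wall_reflection R R' (walk_map (rev (R' # Rs)) (walk_map (R' # Rs) (wall_reflection R' R x)))"
    by (simp del: rev.simps)
  then show ?case using "3.IH"(2) by (simp del: rev.simps add: wall_reflection_wall_reflection)
qed simp_all

lemma norm_walk_map: "norm (walk_map W x) = norm x"
  by (induction W arbitrary: x rule: induct_list012) (simp_all add: norm_wall_reflection)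

section \<open>Regions and walls of a fan\<close>

lemma complete_fanD: "complete_fan F \<Longrightarrow> is_fan F"
  by (simp add: complete_fan_def)

lemma fan_memD:
  assumes "is_fan F" "C \<in> F"
  shows "polyhedron C" "convex C" "closed C" "cone C" "0 \<in> C"
proof -
  have "polyhedron C" "cone C" "C \<noteq> {}"
    using assms unfolding is_fan_def polyhedral_cone_def by blast+
  then show "polyhedron C" "convex C" "closed C" "cone C" "0 \<in> C"
    using polyhedron_imp_convex polyhedron_imp_closed cone_contains_0 by blast+
qed

lemma fan_Int_face_of: "is_fan F \<Longrightarrow> C \<in> F \<Longrightarrow> D \<in> F \<Longrightarrow> (C \<inter> D) face_of C"
  by (simp add: is_fan_def)

lemma fan_face_of_mem: "is_fan F \<Longrightarrow> C \<in> F \<Longrightarrow> G face_of C \<Longrightarrow> G \<noteq> {} \<Longrightarrow> G \<in> F"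
  by (simp add: is_fan_def)

lemma fan_Int_mem:
  assumes "is_fan F" "C \<in> F" "D \<in> F"
  shows "C \<inter> D \<in> F"
  using fan_face_of_mem[OF assms(1,2) fan_Int_face_of[OF assms]] fan_memD(5)[OF assms(1)] assms(2,3)
  by blast

lemma fan_Inter_mem:
  assumes "is_fan F"
  shows "finite S \<Longrightarrow> S \<noteq> {} \<Longrightarrow> S \<subseteq> F \<Longrightarrow> \<Inter>S \<in> F"
  by (induction S rule: finite_ne_induct) (simp_all add: fan_Int_mem[OF assms])

lemma regions_subset: "regions F \<subseteq> F"
  by (auto simp: regions_def)

lemma region_maximal: "R \<in> regions F \<Longrightarrow> C \<in> F \<Longrightarrow> R \<subseteq> C \<Longrightarrow> C = R"
  by (auto simp: regions_def)

lemma finite_regions: "is_fan F \<Longrightarrow> finite (regions F)"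
  unfolding is_fan_def using finite_subset[OF regions_subset] by blast

lemma region_memD:
  assumes "is_fan F" "R \<in> regions F"
  shows "convex R" "closed R" "cone R" "0 \<in> R"
  using fan_memD[OF assms(1)] assms(2) regions_subset by blast+

lemma ex_region_mem:
  assumes "complete_fan F"
  obtains R where "R \<in> regions F" "x \<in> R"
proof -
  obtain C where C: "C \<in> F" "x \<in> C" using assms by (auto simp: complete_fan_def)
  let ?A = "{D \<in> F. C \<subseteq> D}"
  have "finite ?A" using assms by (simp add: complete_fan_def is_fan_def)
  moreover have "?A \<noteq> {}" using C by blast
  ultimately obtain D where D: "D \<in> ?A" "\<And>E. E \<in> ?A \<Longrightarrow> D \<le> E \<Longrightarrow> D = E"
    using finite_has_maximal by meson
  have "D \<in> regions F" unfolding regions_def using D by fastforce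
  then show thesis using that D C by blast
qed

text \<open>The regions not containing x are finitely many closed sets.\<close>
lemma regions_near_point:
  assumes "is_fan F"
  obtains e where "e > 0" "\<And>y Q. y \<in> ball x e \<Longrightarrow> Q \<in> regions F \<Longrightarrow> y \<in> Q \<Longrightarrow> x \<in> Q"
proof -
  let ?U = "\<Union>{Q \<in> regions F. x \<notin> Q}"
  have "open (- ?U)"
    using finite_regions[OF assms] region_memD(2)[OF assms] by (intro open_Compl closed_Union) auto
  moreover have "x \<in> - ?U" by blast
  ultimately obtain e where "e > 0" "ball x e \<subseteq> - ?U"
    using open_contains_ball by blast
  then show thesis using that by blast
qed

lemma fan_subset_if_rel_interior_mem:
  assumes "is_fan F" "C \<in> F" "Q \<in> F" "x \<in> rel_interior C" "x \<in> Q"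
  shows "C \<subseteq> Q"
proof -
  have "(C \<inter> Q) \<inter> rel_interior C \<noteq> {}" using assms(4,5) rel_interior_subset by blast
  then have "C \<subseteq> C \<inter> Q" by (rule subset_of_face_of[OF fan_Int_face_of[OF assms(1-3)] subset_refl])
  then show ?thesis by blast
qed

lemma region_eq_if_rel_interior_mem:
  assumes "is_fan F" "R \<in> regions F" "Q \<in> F" "x \<in> rel_interior R" "x \<in> Q"
  shows "Q = R"
  using fan_subset_if_rel_interior_mem[OF assms(1) _ assms(3-5)] region_maximal[OF assms(2,3)]
    assms(2) regions_subset by blast

lemma interior_region_nonempty:
  assumes F: "complete_fan F" and R: "R \<in> regions F"
  shows "interior R \<noteq> {}"
proof -
  have fan: "is_fan F" using F by (rule complete_fanD)
  obtain x where x: "x \<in> rel_interior R"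
    using rel_interior_eq_empty region_memD[OF fan R] by blast
  obtain e where e: "e > 0" "\<And>y Q. y \<in> ball x e \<Longrightarrow> Q \<in> regions F \<Longrightarrow> y \<in> Q \<Longrightarrow> x \<in> Q"
    using regions_near_point[OF fan] by blast
  have "ball x e \<subseteq> R"
  proof
    fix y assume y: "y \<in> ball x e"
    obtain Q where Q: "Q \<in> regions F" "y \<in> Q" using ex_region_mem[OF F] by blast
    then have "Q = R"
      using region_eq_if_rel_interior_mem[OF fan R _ x] e(2)[OF y] regions_subset by blast
    then show "y \<in> R" using Q by blast
  qed
  then have "x \<in> interior R" using e(1) by (meson mem_interior)
  then show ?thesis by blast
qed

lemma aff_dim_region:
  fixes R :: "'a::euclidean_space set"
  assumes "complete_fan F" "R \<in> regions F"
  shows "aff_dim R = int DIM('a)"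
  by (rule aff_dim_nonempty_interior) (rule interior_region_nonempty[OF assms])

lemma interior_region_Int_region:
  assumes "is_fan F" "R \<in> regions F" "S \<in> regions F" "R \<noteq> S"
  shows "interior R \<inter> S = {}"
proof (rule ccontr)
  assume "interior R \<inter> S \<noteq> {}"
  then obtain x where "x \<in> rel_interior R" "x \<in> S"
    using interior_subset_rel_interior by blast
  then have "S = R"
    using region_eq_if_rel_interior_mem[OF assms(1,2)] assms(3) regions_subset by blast
  then show False using assms(4) by simp
qed

lemma adjacent_neq:
  assumes "complete_fan F" "adjacent F Q Q'"
  shows "Q \<noteq> Q'"
proof
  assume "Q = Q'"
  then show False
    using assms(2) aff_dim_region[OF assms(1), of Q] by (simp add: adjacent_def is_wall_def)
qed

lemma span_eq_hyperplane:
  fixes S :: "'a::euclidean_space set"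
  assumes "0 \<in> S" "aff_dim S = int DIM('a) - 1" "a \<noteq> 0" "S \<subseteq> {x. inner a x = 0}"
  shows "span S = {x. inner a x = 0}"
proof (rule subspace_dim_equal[OF subspace_span subspace_hyperplane])
  show "span S \<subseteq> {x. inner a x = 0}" by (rule span_minimal[OF assms(4) subspace_hyperplane])
  have "aff_dim S = int (dim S)" using aff_dim_eq_dim[of 0 S] assms(1) hull_inc by fastforce
  then show "dim {x. inner a x = 0} \<le> dim (span S)"
    using assms(2) dim_hyperplane[OF assms(3)] by simp
qed

lemma cone_face_of_contains_0:
  assumes "cone Q" "C face_of Q" "C \<noteq> {}"
  shows "0 \<in> C"
proof -
  obtain p where p: "p \<in> C" using assms(3) by blast
  have pQ: "p \<in> Q" using p assms(2) face_of_imp_subset by blast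
  show ?thesis
  proof (cases "p = 0")
    case False
    have "p \<in> open_segment 0 (2 *\<^sub>R p)"
      unfolding in_segment(2) using False by (intro conjI exI[of _ "1/2"]) simp_all
    moreover have "0 \<in> Q" "2 *\<^sub>R p \<in> Q" using assms(1) pQ cone_contains_0 by (auto simp: cone_def)
    ultimately show ?thesis using face_ofD[OF assms(2) _ _ _ p] by blast
  qed (use p in simp)
qed

text \<open>Being a cone, R is then the whole space, and every cone of F is a face of it.\<close>
lemma lineal_eq_UNIV_if_zero_in_interior:
  assumes F: "is_fan F" and R: "R \<in> regions F" and z: "0 \<in> interior R"
  shows "lineal F = UNIV"
proof -
  obtain e where e: "e > 0" "ball 0 e \<subseteq> R" using z mem_interior by blast
  have "v \<in> R" for v
  proof (cases "v = 0")
    case False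
    have "(e / 2 / norm v) *\<^sub>R v \<in> R" using e False by (intro subsetD[OF e(2)]) simp
    moreover have "2 * norm v / e \<ge> 0" using e(1) by simp
    ultimately have "(2 * norm v / e) *\<^sub>R ((e / 2 / norm v) *\<^sub>R v) \<in> R"
      using region_memD(3)[OF F R] unfolding cone_def by blast
    moreover have "(2 * norm v / e) *\<^sub>R ((e / 2 / norm v) *\<^sub>R v) = v" using False e(1) by simp
    ultimately show ?thesis by simp
  qed (use region_memD(4)[OF F R] in simp)
  then have RU: "R = UNIV" by blast
  have "C = UNIV" if C: "C \<in> F" for C
  proof -
    have "(R \<inter> C) face_of R" using fan_Int_face_of[OF F _ C] R regions_subset by blast
    then have "C face_of UNIV" using RU by simp
    then show ?thesis using face_of_affine_trivial[OF affine_UNIV] fan_memD(5)[OF F C] by blast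
  qed
  then show ?thesis unfolding lineal_def lineality_def by auto
qed

lemma open_segment_through_ball:
  fixes c y :: "'a::euclidean_space"
  assumes "y \<noteq> c" "e > 0"
  obtains p where "p \<in> ball c e" "c \<in> open_segment p y"
proof -
  define t where "t = e / (2 * norm (y - c))"
  have t: "t > 0" using assms by (simp add: t_def)
  define p where "p = c - t *\<^sub>R (y - c)"
  have "dist c p = e / 2" using assms t by (simp add: p_def t_def dist_norm)
  then have "p \<in> ball c e" using assms(2) by simp
  have "(1 / (1 + t)) *\<^sub>R ((1 + t) *\<^sub>R c) = (1 / (1 + t)) *\<^sub>R (p + t *\<^sub>R y)"
    by (simp add: p_def algebra_simps)
  moreover have "1 - t / (1 + t) = 1 / (1 + t)" using t by (simp add: field_simps)
  ultimately have "c = (1 - t / (1 + t)) *\<^sub>R p + (t / (1 + t)) *\<^sub>R y"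
    using t by (simp add: scaleR_add_right)
  moreover have "p \<noteq> y"
  proof
    assume "p = y"
    then have "(1 + t) *\<^sub>R y = (1 + t) *\<^sub>R c" by (simp add: p_def algebra_simps)
    then show False using assms(1) t by simp
  qed
  ultimately have "c \<in> open_segment p y" unfolding in_segment(2) using t
    by (intro conjI exI[of _ "t / (1 + t)"]) simp_all
  then show thesis using that \<open>p \<in> ball c e\<close> by blast
qed

lemma Inter_regions_through_rel_interior:
  assumes F: "complete_fan F" and C: "C \<in> F" and c: "c \<in> rel_interior C"
  shows "\<Inter>{Q \<in> regions F. c \<in> Q} = C"
proof -
  have fan: "is_fan F" using F by (rule complete_fanD)
  have cC: "c \<in> C" using c rel_interior_subset by blast
  have "y \<in> C" if y: "y \<in> \<Inter>{Q \<in> regions F. c \<in> Q}" for y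
  proof (rule ccontr)
    assume yC: "y \<notin> C"
    obtain e where e: "e > 0" "\<And>z Q. z \<in> ball c e \<Longrightarrow> Q \<in> regions F \<Longrightarrow> z \<in> Q \<Longrightarrow> c \<in> Q"
      using regions_near_point[OF fan] by blast
    obtain p where p: "p \<in> ball c e" "c \<in> open_segment p y"
      using open_segment_through_ball[of y c e] yC cC e(1) by blast
    obtain Q where Q: "Q \<in> regions F" "p \<in> Q" using ex_region_mem[OF F] by blast
    then have "c \<in> Q" using e(2) p(1) by blast
    then have "y \<in> Q" using y Q(1) by blast
    then have "y \<in> Q \<inter> C"
      using face_ofD[OF fan_Int_face_of[OF fan _ C] p(2) Q(2)] Q(1) regions_subset \<open>c \<in> Q\<close> cC
      by blast
    then show False using yC by blast
  qed
  moreover have "C \<subseteq> Q" if "Q \<in> regions F" "c \<in> Q" for Q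
    using fan_subset_if_rel_interior_mem[OF fan C _ c] regions_subset that by blast
  ultimately show ?thesis by blast
qed

lemma region_facet:
  fixes Q :: "'a::euclidean_space set"
  assumes F: "complete_fan F" and Q: "Q \<in> regions F" and x: "x \<notin> Q"
  obtains a where "a \<noteq> 0" "Q \<subseteq> {y. inner a y \<le> 0}" "inner a x > 0"
    "(Q \<inter> {y. inner a y = 0}) face_of Q" "aff_dim (Q \<inter> {y. inner a y = 0}) = int DIM('a) - 1"
proof -
  have fan: "is_fan F" using F by (rule complete_fanD)
  have "polyhedron Q" using fan_memD(1)[OF fan] Q regions_subset by blast
  then obtain H where finH: "finite H" and seq: "Q = affine hull Q \<inter> \<Inter>H"
    and "\<And>h. h \<in> H \<Longrightarrow> \<exists>a b. a \<noteq> 0 \<and> h = {x. a \<bullet> x \<le> b}"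
    and min: "\<And>H'. H' \<subset> H \<Longrightarrow> Q \<subset> affine hull Q \<inter> \<Inter>H'"
    by (simp add: polyhedron_Int_affine_minimal) meson
  then obtain a b where ab: "\<And>h. h \<in> H \<Longrightarrow> a h \<noteq> 0 \<and> h = {x. a h \<bullet> x \<le> b h}"
    by metis
  have dimQ: "aff_dim Q = int DIM('a)" by (rule aff_dim_region[OF F Q])
  then have "Q = \<Inter>H" using seq aff_dim_eq_full[of Q] by simp
  then obtain h where h: "h \<in> H" "x \<notin> h" "Q \<subseteq> h" using x by blast
  have facet: "(Q \<inter> {y. a h \<bullet> y = b h}) facet_of Q"
    using facet_of_polyhedron_explicit[OF finH seq ab min] h(1) by blast
  then have "0 \<in> Q \<inter> {y. a h \<bullet> y = b h}"
    using cone_face_of_contains_0[OF region_memD(3)[OF fan Q]] unfolding facet_of_def by blast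
  then have b0: "b h = 0" by simp
  show thesis
  proof (rule that[of "a h"])
    show "a h \<noteq> 0" "Q \<subseteq> {y. a h \<bullet> y \<le> 0}" "a h \<bullet> x > 0"
      using ab[OF h(1)] b0 h(2,3) by auto
    show "(Q \<inter> {y. a h \<bullet> y = 0}) face_of Q"
      "aff_dim (Q \<inter> {y. a h \<bullet> y = 0}) = int DIM('a) - 1"
      using facet b0 dimQ by (simp_all add: facet_of_def)
  qed
qed

lemma Int_region_eq_facet:
  assumes fan: "is_fan F" and Q: "Q \<in> regions F" and Q': "Q' \<in> F" "Q' \<noteq> Q"
    and C: "C face_of Q" "aff_dim C = aff_dim Q - 1" and p: "p \<in> rel_interior C" "p \<in> Q'"
  shows "Q \<inter> Q' = C"
proof -
  have QF: "Q \<in> F" using Q regions_subset by blast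
  have face: "(Q \<inter> Q') face_of Q" by (rule fan_Int_face_of[OF fan QF Q'(1)])
  have "p \<in> Q" using p(1) rel_interior_subset face_of_imp_subset[OF C(1)] by blast
  then have CQQ': "C \<subseteq> Q \<inter> Q'"
    using subset_of_face_of[OF face face_of_imp_subset[OF C(1)]] p by blast
  have "Q \<inter> Q' \<noteq> Q" using region_maximal[OF Q Q'(1)] Q'(2) by blast
  then have "aff_dim (Q \<inter> Q') < aff_dim Q"
    by (rule face_of_aff_dim_lt[OF region_memD(1)[OF fan Q] face])
  moreover have "C face_of (Q \<inter> Q')" by (rule face_of_subset[OF C(1) CQQ']) blast
  then have "aff_dim C < aff_dim (Q \<inter> Q')" if "C \<noteq> Q \<inter> Q'"
    using face_of_aff_dim_lt[OF face_of_imp_convex[OF face]] that by blast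
  ultimately show ?thesis using C(2) by force
qed

lemma region_wall_towards:
  fixes Q :: "'a::euclidean_space set"
  assumes F: "complete_fan F" and Q: "Q \<in> regions F" and x: "x \<notin> Q"
  obtains Q' a where "adjacent F Q Q'" "a \<noteq> 0" "span (Q' \<inter> Q) = {y. inner a y = 0}"
    "Q \<subseteq> {y. inner a y \<le> 0}" "inner a x > 0"
proof -
  have fan: "is_fan F" using F by (rule complete_fanD)
  obtain a where a: "a \<noteq> 0" "Q \<subseteq> {y. inner a y \<le> 0}" "inner a x > 0"
    and facet: "(Q \<inter> {y. inner a y = 0}) face_of Q"
      "aff_dim (Q \<inter> {y. inner a y = 0}) = int DIM('a) - 1"
    using region_facet[OF F Q x] by blast
  define C where "C = Q \<inter> {y. inner a y = 0}"
  have C: "C face_of Q" "aff_dim C = int DIM('a) - 1" using facet by (simp_all add: C_def)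
  then have "C \<noteq> {}" by auto
  then obtain p where p: "p \<in> rel_interior C"
    using rel_interior_eq_empty face_of_imp_convex[OF C(1)] by blast
  have ap: "inner a p = 0" using p rel_interior_subset unfolding C_def by blast
  obtain e where e: "e > 0" "\<And>y R. y \<in> ball p e \<Longrightarrow> R \<in> regions F \<Longrightarrow> y \<in> R \<Longrightarrow> p \<in> R"
    using regions_near_point[OF fan] by blast
  define y where "y = p + (e / 2 / norm a) *\<^sub>R a"
  have "y \<in> ball p e" using e(1) a(1) by (simp add: y_def dist_norm)
  moreover obtain Q' where Q': "Q' \<in> regions F" "y \<in> Q'" using ex_region_mem[OF F] by blast
  ultimately have pQ': "p \<in> Q'" using e(2) by blast
  have "y \<notin> Q"
  proof
    assume "y \<in> Q"
    then have "inner a y \<le> 0" using a(2) by blast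
    moreover have "inner a y = (e / 2 / norm a) * inner a a" by (simp add: y_def inner_add_right ap)
    moreover have "(e / 2 / norm a) * inner a a > 0" using e(1) a(1) by simp
    ultimately show False by linarith
  qed
  then have "Q' \<noteq> Q" using Q'(2) by blast
  moreover have "Q' \<in> F" using Q'(1) regions_subset by blast
  ultimately have "Q \<inter> Q' = C"
    using Int_region_eq_facet[OF fan Q _ _ C(1) _ p pQ'] C(2) aff_dim_region[OF F Q] by simp
  then have wall: "Q' \<inter> Q = C" by auto
  have "adjacent F Q Q'" using Q Q' wall C(2) by (simp add: adjacent_def is_wall_def Int_commute)
  moreover have "span (Q' \<inter> Q) = {y. inner a y = 0}"
    using span_eq_hyperplane[OF _ C(2) a(1)] region_memD(4)[OF fan Q] wall by (simp add: C_def)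
  ultimately show thesis using that a by blast
qed

lemma inner_wall_reflection_increases:
  fixes Q :: "'a::euclidean_space set"
  assumes F: "complete_fan F" and Q: "Q \<in> regions F" and x: "x \<notin> Q" and w: "w \<in> interior Q"
  obtains Q' where "adjacent F Q Q'" "inner w x < inner (wall_reflection Q' Q w) x"
proof -
  obtain Q' a where adj: "adjacent F Q Q'" and a: "a \<noteq> 0"
    and sp: "span (Q' \<inter> Q) = {y. inner a y = 0}"
    and Qa: "Q \<subseteq> {y. inner a y \<le> 0}" and ax: "inner a x > 0"
    using region_wall_towards[OF F Q x] by blast
  have "inner a w < 0" using interior_mono[OF Qa] w a by auto
  then have "(2 * inner a w / inner a a) * inner a x < 0"
    using a ax by (simp add: mult_neg_pos divide_neg_pos)
  moreover have "wall_reflection Q' Q w = w - (2 * inner a w / inner a a) *\<^sub>R a"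
    unfolding wall_reflection_def sp by (rule reflect_hyperplane[OF a])
  ultimately show thesis using that adj by (simp add: inner_diff_left)
qed

section \<open>Reflection-compatible labellings\<close>

text \<open>The model is the vertex set of an inscribed polytope with normal fan F, translated so that
  the centre of the sphere is 0: the label of a region is the vertex whose normal cone it is.\<close>
definition reflection_compatible :: "'a::euclidean_space set set \<Rightarrow> ('a set \<Rightarrow> 'a) \<Rightarrow> bool" where
  "reflection_compatible F w \<longleftrightarrow> (\<forall>R\<in>regions F. w R \<in> interior R)
      \<and> (\<forall>R R'. adjacent F R R' \<longrightarrow> wall_reflection R' R (w R) = w R')"

lemma reflection_compatibleD:
  assumes "reflection_compatible F w"
  shows "R \<in> regions F \<Longrightarrow> w R \<in> interior R"
    and "adjacent F R R' \<Longrightarrow> wall_reflection R' R (w R) = w R'"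
  using assms by (simp_all add: reflection_compatible_def)

lemma walk_map_reflection_compatible:
  assumes "reflection_compatible F w"
  shows "is_walk F W \<Longrightarrow> walk_map W (w (hd W)) = w (last W)"
proof (induction W rule: induct_list012)
  case (3 R R' Rs)
  then show ?case by (simp add: is_walk_Cons_Cons reflection_compatibleD(2)[OF assms])
qed (simp_all add: is_walk_def)

lemma reflection_compatible_wall_towards:
  assumes F: "complete_fan F" and w: "reflection_compatible F w"
    and Q: "Q \<in> regions F" and x: "x \<notin> Q"
  obtains Q' where "adjacent F Q Q'" "inner (w Q) x < inner (w Q') x"
  using inner_wall_reflection_increases[OF F Q x reflection_compatibleD(1)[OF w Q]]
    reflection_compatibleD(2)[OF w] by metis

lemma reflection_compatible_max_interior:
  assumes F: "complete_fan F" and w: "reflection_compatible F w"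
    and R: "R \<in> regions F" and x: "x \<in> interior R" and S: "S \<in> regions F"
  shows "inner (w S) x \<le> inner (w R) x"
proof -
  let ?f = "\<lambda>S. inner (w S) x"
  have fin: "finite (?f ` regions F)" using finite_regions[OF complete_fanD[OF F]] by simp
  obtain S0 where S0: "S0 \<in> regions F" "?f S0 = Max (?f ` regions F)"
    using Max_in[OF fin] R by fastforce
  have max: "?f S \<le> ?f S0" if "S \<in> regions F" for S using S0(2) Max_ge[OF fin] that by simp
  have "x \<in> S0"
  proof (rule ccontr)
    assume "x \<notin> S0"
    then obtain Q' where "adjacent F S0 Q'" "?f S0 < ?f Q'"
      using reflection_compatible_wall_towards[OF F w S0(1)] by blast
    then show False using max[of Q'] by (simp add: adjacent_def)
  qed
  then have "S0 = R"
    using interior_region_Int_region[OF complete_fanD[OF F] R S0(1)] x by blast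
  then show ?thesis using max[OF S] by simp
qed

lemma reflection_compatible_max:
  assumes F: "complete_fan F" and w: "reflection_compatible F w"
    and R: "R \<in> regions F" and x: "x \<in> R" and S: "S \<in> regions F"
  shows "inner (w S) x \<le> inner (w R) x"
proof -
  let ?K = "{x. inner (w S - w R) x \<le> 0}"
  have "interior R \<subseteq> ?K"
    using reflection_compatible_max_interior[OF F w R _ S] by (auto simp: inner_diff_left)
  then have "closure (interior R) \<subseteq> ?K" using closed_halfspace_le closure_minimal by blast
  moreover have "closure (interior R) = R"
    using convex_closure_interior[OF region_memD(1)[OF complete_fanD[OF F] R]
        interior_region_nonempty[OF F R]] region_memD(2)[OF complete_fanD[OF F] R] by simp
  ultimately show ?thesis using x by (auto simp: inner_diff_left)
qed

text \<open>Walking from Q towards a point u of the interior of R strictly increases the linear form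
  at u, so no region repeats.\<close>
lemma reflection_compatible_path:
  assumes F: "complete_fan F" and w: "reflection_compatible F w"
    and Q: "Q \<in> regions F" and R: "R \<in> regions F"
  obtains W where "is_path F W" "hd W = Q" "last W = R"
proof -
  obtain u where u: "u \<in> interior R" using interior_region_nonempty[OF F R] by blast
  let ?f = "\<lambda>S. inner (w S) u"
  have "\<exists>W. is_walk F W \<and> distinct W \<and> hd W = Q \<and> last W = R \<and> (\<forall>S\<in>set W. ?f Q \<le> ?f S)"
    if "Q \<in> regions F" "card {S \<in> regions F. ?f Q < ?f S} = n" for n Q
    using that
  proof (induction n arbitrary: Q rule: less_induct)
    case (less n Q)
    show ?case
    proof (cases "Q = R")
      case True
      then show ?thesis using R by (intro exI[of _ "[R]"]) (simp add: is_walk_singleton)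
    next
      case False
      then have "u \<notin> Q"
        using interior_region_Int_region[OF complete_fanD[OF F] R less.prems(1)] u by blast
      then obtain Q' where adj: "adjacent F Q Q'" and up: "?f Q < ?f Q'"
        using reflection_compatible_wall_towards[OF F w less.prems(1)] by blast
      have Q': "Q' \<in> regions F" using adj by (simp add: adjacent_def)
      have "{S \<in> regions F. ?f Q' < ?f S} \<subset> {S \<in> regions F. ?f Q < ?f S}" using up Q' by auto
      then have "card {S \<in> regions F. ?f Q' < ?f S} < card {S \<in> regions F. ?f Q < ?f S}"
        by (rule psubset_card_mono[rotated]) (simp add: finite_regions[OF complete_fanD[OF F]])
      then have "card {S \<in> regions F. ?f Q' < ?f S} < n" using less.prems(2) by simp
      then obtain W where W: "is_walk F W" "distinct W" "hd W = Q'" "last W = R"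
        "\<forall>S\<in>set W. ?f Q' \<le> ?f S"
        using less.IH Q' by blast
      then obtain Ws where Ws: "W = Q' # Ws" by (cases W) (auto simp: is_walk_def)
      have "is_walk F (Q # W)" using adj W(1) Ws by (simp add: is_walk_Cons_Cons)
      moreover have "distinct (Q # W)" using W(2,5) up by force
      moreover have "\<forall>S\<in>set (Q # W). ?f Q \<le> ?f S" using W(5) up by force
      moreover have "last (Q # W) = R" using W(4) Ws by simp
      ultimately show ?thesis by (intro exI[of _ "Q # W"]) simp
    qed
  qed
  then show thesis using that Q unfolding is_path_def by blast
qed

lemma norm_reflection_compatible:
  assumes F: "complete_fan F" and w: "reflection_compatible F w"
    and Q: "Q \<in> regions F" and R: "R \<in> regions F"
  shows "norm (w R) = norm (w Q)"
proof -
  obtain W where "is_path F W" "hd W = Q" "last W = R"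
    using reflection_compatible_path[OF F w Q R] .
  then show ?thesis
    using walk_map_reflection_compatible[OF w] norm_walk_map by (metis is_path_def)
qed

section \<open>Normal cones of a polytope\<close>

lemma normal_cone_vertex_iff:
  assumes P: "P = convex hull V" and v: "v \<in> P"
  shows "c \<in> normal_cone P {v} \<longleftrightarrow> (\<forall>u\<in>V. inner c u \<le> inner c v)"
proof
  assume "c \<in> normal_cone P {v}"
  moreover have "V \<subseteq> P" unfolding P by (rule hull_subset)
  ultimately show "\<forall>u\<in>V. inner c u \<le> inner c v" unfolding normal_cone_def by blast
next
  assume "\<forall>u\<in>V. inner c u \<le> inner c v"
  then have "convex hull V \<subseteq> {y. inner c y \<le> inner c v}"
    by (intro hull_minimal) (auto intro: convex_halfspace_le)
  then show "c \<in> normal_cone P {v}" unfolding normal_cone_def P by blast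
qed

lemma convex_normal_cone: "convex (normal_cone P G)"
proof -
  have "normal_cone P G = (\<Inter>x\<in>G. \<Inter>y\<in>P. {c. inner (y - x) c \<le> 0})"
    unfolding normal_cone_def by (auto simp: inner_diff_left inner_diff_right inner_commute)
  then show ?thesis by (simp add: convex_INT convex_halfspace_le)
qed

lemma normal_cone_face_of_convex_hull:
  fixes V :: "'a::euclidean_space set"
  assumes V: "finite V" and P: "P = convex hull V" and G: "G face_of P"
  shows "normal_cone P G = (\<Inter>v\<in>G \<inter> V. normal_cone P {v})"
proof
  show "normal_cone P G \<subseteq> (\<Inter>v\<in>G \<inter> V. normal_cone P {v})"
    unfolding normal_cone_def by blast
  obtain S where S: "S \<subseteq> V" "G = convex hull S"
    using face_of_convex_hull_subset[OF finite_imp_compact[OF V]] G P by metis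
  show "(\<Inter>v\<in>G \<inter> V. normal_cone P {v}) \<subseteq> normal_cone P G"
  proof
    fix c assume c: "c \<in> (\<Inter>v\<in>G \<inter> V. normal_cone P {v})"
    have "S \<subseteq> {x. \<forall>y\<in>P. inner c y \<le> inner c x}"
      using c S hull_subset[of S convex] unfolding normal_cone_def by blast
    moreover have "{x. \<forall>y\<in>P. inner c y \<le> inner c x} = (\<Inter>y\<in>P. {x. inner c x \<ge> inner c y})"
      by auto
    then have "convex {x. \<forall>y\<in>P. inner c y \<le> inner c x}"
      by (simp add: convex_INT convex_halfspace_ge)
    ultimately have "G \<subseteq> {x. \<forall>y\<in>P. inner c y \<le> inner c x}"
      unfolding S(2) by (rule hull_minimal)
    then show "c \<in> normal_cone P G" unfolding normal_cone_def by blast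
  qed
qed

lemma face_of_convex_hull_Int_nonempty:
  fixes V :: "'a::euclidean_space set"
  assumes "finite V" "G face_of convex hull V" "G \<noteq> {}"
  shows "G \<inter> V \<noteq> {}"
proof -
  obtain S where "S \<subseteq> V" "G = convex hull S"
    using face_of_convex_hull_subset[OF finite_imp_compact] assms(1,2) by metis
  then show ?thesis using assms(3) hull_subset[of S convex] by auto
qed

section \<open>From a reflection-compatible labelling to an inscribed polytope\<close>

context
  fixes F :: "'a::euclidean_space set set" and w :: "'a set \<Rightarrow> 'a" and P :: "'a set"
  assumes F: "complete_fan F" and w: "reflection_compatible F w"
    and P: "P = convex hull (w ` regions F)"
begin

lemma label_mem_polytope: "R \<in> regions F \<Longrightarrow> w R \<in> P"
  unfolding P by (simp add: hull_inc)

lemma mem_normal_cone_label_iff: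
  assumes "R \<in> regions F"
  shows "c \<in> normal_cone P {w R} \<longleftrightarrow> (\<forall>S\<in>regions F. inner c (w S) \<le> inner c (w R))"
  using normal_cone_vertex_iff[OF P label_mem_polytope[OF assms]] by blast

lemma normal_cone_label:
  assumes R: "R \<in> regions F"
  shows "normal_cone P {w R} = R"
proof
  let ?N = "normal_cone P {w R}"
  have fan: "is_fan F" using F by (rule complete_fanD)
  show "R \<subseteq> ?N"
    using reflection_compatible_max[OF F w R] mem_normal_cone_label_iff[OF R]
    by (simp add: inner_commute subset_iff)
  have "interior ?N \<subseteq> R"
  proof
    fix y assume y: "y \<in> interior ?N"
    obtain S where S: "S \<in> regions F" "y \<in> S" using ex_region_mem[OF F] by blast
    show "y \<in> R"
    proof (rule ccontr)
      assume "y \<notin> R"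
      then have "S \<noteq> R" using S by blast
      then have "interior S \<inter> R = {}" by (rule interior_region_Int_region[OF fan S(1) R])
      then have "w S \<notin> R" using reflection_compatibleD(1)[OF w S(1)] by (metis IntI empty_iff)
      then have "w S - w R \<noteq> 0"
        using reflection_compatibleD(1)[OF w R] interior_subset by (metis subsetD right_minus_eq)
      moreover have "?N \<subseteq> {c. inner (w S - w R) c \<le> 0}"
        using mem_normal_cone_label_iff[OF R] S(1)
        by (auto simp: inner_diff_left inner_diff_right inner_commute)
      then have "y \<in> interior {c. inner (w S - w R) c \<le> 0}" using interior_mono y by blast
      ultimately have "inner (w S - w R) y < 0" by simp
      moreover have "inner (w R) y \<le> inner (w S) y"
        by (rule reflection_compatible_max[OF F w S R])
      ultimately show False by (simp add: inner_diff_left)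
    qed
  qed
  moreover have "interior ?N \<noteq> {}"
    using interior_mono[OF \<open>R \<subseteq> ?N\<close>] interior_region_nonempty[OF F R] by blast
  ultimately have "closure ?N \<subseteq> R"
    using convex_closure_interior[OF convex_normal_cone] closure_minimal region_memD(2)[OF fan R]
    by metis
  then show "?N \<subseteq> R" using closure_subset by blast
qed

lemma normal_cone_face_of_labels:
  assumes G: "G face_of P"
  shows "normal_cone P G = \<Inter>{R \<in> regions F. w R \<in> G}"
proof -
  have "finite (w ` regions F)" using finite_regions[OF complete_fanD[OF F]] by simp
  then have "normal_cone P G = (\<Inter>v\<in>G \<inter> w ` regions F. normal_cone P {v})"
    using normal_cone_face_of_convex_hull P G by blast
  also have "\<dots> = (\<Inter>R\<in>{R \<in> regions F. w R \<in> G}. normal_cone P {w R})" by auto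
  also have "\<dots> = \<Inter>{R \<in> regions F. w R \<in> G}" using normal_cone_label by simp
  finally show ?thesis .
qed

lemma label_mem_supporting_face_iff:
  assumes Q: "Q \<in> regions F" "c \<in> Q" and R: "R \<in> regions F"
  shows "w R \<in> P \<inter> {x. inner c x = inner c (w Q)} \<longleftrightarrow> c \<in> R"
proof -
  have "\<forall>y\<in>P. inner c y \<le> inner c (w Q)"
    using normal_cone_label[OF Q(1)] Q(2) unfolding normal_cone_def by blast
  then have "(\<forall>y\<in>P. inner c y \<le> inner c (w R)) \<longleftrightarrow> inner c (w R) = inner c (w Q)"
    using label_mem_polytope[OF Q(1)] label_mem_polytope[OF R] by force
  moreover have "c \<in> R \<longleftrightarrow> (\<forall>y\<in>P. inner c y \<le> inner c (w R))"
    using normal_cone_label[OF R] unfolding normal_cone_def by blast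
  ultimately show ?thesis using label_mem_polytope[OF R] by blast
qed

lemma normal_fan_labels: "normal_fan P = F"
proof -
  have fan: "is_fan F" using F by (rule complete_fanD)
  show ?thesis
  proof (intro equalityI subsetI)
    fix X assume "X \<in> normal_fan P"
    then obtain G where G: "G face_of P" "G \<noteq> {}" "X = normal_cone P G"
      unfolding normal_fan_def by blast
    have "{R \<in> regions F. w R \<in> G} \<noteq> {}"
      using face_of_convex_hull_Int_nonempty[of "w ` regions F" G] finite_regions[OF fan] G P by auto
    moreover have "{R \<in> regions F. w R \<in> G} \<subseteq> F" using regions_subset by blast
    ultimately have "\<Inter>{R \<in> regions F. w R \<in> G} \<in> F"
      using fan_Inter_mem[OF fan] finite_regions[OF fan] by simp
    then show "X \<in> F" using normal_cone_face_of_labels[OF G(1)] G(3) by simp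
  next
    fix C assume C: "C \<in> F"
    obtain c where c: "c \<in> rel_interior C"
      using rel_interior_eq_empty fan_memD(2,5)[OF fan C] by blast
    obtain Q where Q: "Q \<in> regions F" "c \<in> Q" using ex_region_mem[OF F] by blast
    define G where "G = P \<inter> {x. inner c x = inner c (w Q)}"
    have "\<forall>y\<in>P. inner c y \<le> inner c (w Q)"
      using normal_cone_label[OF Q(1)] Q(2) unfolding normal_cone_def by blast
    then have "G face_of P"
      unfolding G_def by (intro face_of_Int_supporting_hyperplane_le) (simp_all add: P)
    moreover have "G \<noteq> {}" using label_mem_supporting_face_iff[OF Q Q(1)] Q(2) G_def by blast
    moreover have "{R \<in> regions F. w R \<in> G} = {R \<in> regions F. c \<in> R}"
      using label_mem_supporting_face_iff[OF Q] unfolding G_def by blast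
    then have "normal_cone P G = C"
      using normal_cone_face_of_labels[OF \<open>G face_of P\<close>] Inter_regions_through_rel_interior[OF F C c]
      by simp
    ultimately show "C \<in> normal_fan P" unfolding normal_fan_def by blast
  qed
qed

lemma inscribed_polytope_labels: "inscribed_polytope P"
  unfolding inscribed_polytope_def
proof
  show "polytope P"
    using finite_regions[OF complete_fanD[OF F]] P by (auto simp: polytope_def)
  obtain Q where Q: "Q \<in> regions F" using ex_region_mem[OF F] by blast
  have "{v. v extreme_point_of P} \<subseteq> w ` regions F"
    using extreme_point_of_convex_hull P by blast
  then have "{v. v extreme_point_of P} \<subseteq> sphere 0 (norm (w Q))"
    using norm_reflection_compatible[OF F w Q] by auto
  then show "\<exists>c r. {v. v extreme_point_of P} \<subseteq> sphere c r" by blast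
qed

end

lemma reflection_compatible_imp_inscribable:
  assumes "complete_fan F" "reflection_compatible F w"
  shows "inscribable F"
  using normal_fan_labels[OF assms refl] inscribed_polytope_labels[OF assms refl]
  unfolding inscribable_def by blast

section \<open>Transporting a point of the inscribed space\<close>

lemma walk_map_eq_if_InSpc:
  assumes v0: "v0 \<in> InSpc F R0" and W: "is_walk F W" "hd W = R0"
    and W': "is_walk F W'" "hd W' = R0" "last W' = last W"
  shows "walk_map W v0 = walk_map W' v0"
proof -
  let ?C = "W @ tl (rev W')"
  have ne: "W \<noteq> []" "rev W' \<noteq> []" using W(1) W'(1) by (simp_all add: is_walk_nonempty)
  have join: "last W = hd (rev W')" using W'(3) ne(2) by (simp add: hd_rev)
  have "closed_walk_at F R0 ?C"
    unfolding closed_walk_at_def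
    using is_walk_append[OF W(1) is_walk_rev[OF W'(1)] join] last_append_tl[OF ne(2) join]
      W(2) W'(2) ne by (simp add: last_rev)
  then have "walk_map ?C v0 = v0" using v0 by (simp add: InSpc_def)
  then have "walk_map (rev W') (walk_map W v0) = v0" using walk_map_append[OF ne(1) join] by simp
  then show ?thesis using walk_map_rev[of "rev W'"] by (metis rev_rev_ident)
qed

definition transported_label :: "'a::euclidean_space set set \<Rightarrow> 'a set \<Rightarrow> 'a \<Rightarrow> 'a set \<Rightarrow> 'a" where
  "transported_label F R0 v0 R = walk_map (SOME W. is_walk F W \<and> hd W = R0 \<and> last W = R) v0"

lemma transported_label_eq:
  assumes "v0 \<in> InSpc F R0" "is_walk F W" "hd W = R0" "last W = R"
  shows "transported_label F R0 v0 R = walk_map W v0"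
proof -
  let ?W = "SOME W. is_walk F W \<and> hd W = R0 \<and> last W = R"
  have "\<exists>W. is_walk F W \<and> hd W = R0 \<and> last W = R" using assms(2-4) by blast
  then have "is_walk F ?W \<and> hd ?W = R0 \<and> last ?W = R" by (rule someI_ex)
  then show ?thesis
    unfolding transported_label_def using walk_map_eq_if_InSpc[OF assms(1)] assms(2-4) by metis
qed

lemma transported_label_reflection_compatible:
  assumes v0: "v0 \<in> InSpc F R0"
    and paths: "\<forall>R\<in>regions F. \<exists>W. is_path F W \<and> hd W = R0 \<and> last W = R \<and> walk_map W v0 \<in> interior R"
  shows "reflection_compatible F (transported_label F R0 v0)"
  unfolding reflection_compatible_def
proof (intro conjI ballI allI impI)
  fix R assume "R \<in> regions F"
  then obtain W where "is_path F W" "hd W = R0" "last W = R" "walk_map W v0 \<in> interior R"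
    using paths by blast
  then show "transported_label F R0 v0 R \<in> interior R"
    using transported_label_eq[OF v0, of W R] by (simp add: is_path_def)
next
  fix R R' assume adj: "adjacent F R R'"
  then obtain W where W: "is_walk F W" "hd W = R0" "last W = R"
    using paths by (auto simp: adjacent_def is_path_def)
  have step: "is_walk F [R, R']" using adj by (simp add: is_walk_Cons_Cons is_walk_singleton adjacent_def)
  have join: "last W = hd [R, R']" using W(3) by simp
  have "transported_label F R0 v0 R' = walk_map (W @ tl [R, R']) v0"
    using transported_label_eq[OF v0 is_walk_append[OF W(1) step join]] W(2) is_walk_nonempty[OF W(1)]
    by simp
  also have "\<dots> = wall_reflection R' R (walk_map W v0)"
    using walk_map_append[OF is_walk_nonempty[OF W(1)] join] by simp
  finally show "wall_reflection R' R (transported_label F R0 v0 R) = transported_label F R0 v0 R'"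
    using transported_label_eq[OF v0 W] by simp
qed

section \<open>From an inscribed polytope to a reflection-compatible labelling\<close>

lemma inner_lt_if_equidistant:
  assumes "norm (u - c) = norm (v - c)" "u \<noteq> v"
  shows "inner (v - c) u < inner (v - c) v"
proof -
  have "2 * inner (v - c) (v - u) = norm (v - u) ^ 2"
    using assms(1)
    by (simp add: power2_norm_eq_inner inner_diff_left inner_diff_right inner_commute
        power2_eq_iff_nonneg[symmetric])
  moreover have "norm (v - u) ^ 2 > 0" using assms(2) by simp
  ultimately have "inner (v - c) (v - u) > 0" by linarith
  then show ?thesis by (simp add: inner_diff_right)
qed

lemma equidistant_vertex_in_interior_normal_cone:
  assumes V: "finite V" and P: "P = convex hull V" and v: "v \<in> V"
    and eq: "\<forall>u\<in>V. norm (u - c) = norm (v - c)"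
  shows "v - c \<in> interior (normal_cone P {v})"
proof -
  let ?O = "\<Inter>u\<in>V - {v}. {x. inner (u - v) x < 0}"
  have "open ?O" using V by (intro open_INT) (auto intro: open_halfspace_lt)
  moreover have "v - c \<in> ?O"
    using inner_lt_if_equidistant eq by (auto simp: inner_diff_left inner_commute)
  moreover have "inner x u \<le> inner x v" if "x \<in> ?O" "u \<in> V" for x u
  proof (cases "u = v")
    case False
    then have "inner (u - v) x < 0" using that by blast
    then show ?thesis by (simp add: inner_diff_left inner_diff_right inner_commute)
  qed simp
  then have "?O \<subseteq> normal_cone P {v}"
    using normal_cone_vertex_iff[OF P] hull_inc[OF v] P by blast
  ultimately show ?thesis using interior_maximal by blast
qed

lemma polytope_extreme_points:
  fixes P :: "'a::euclidean_space set"
  assumes "polytope P"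
  shows "finite {v. v extreme_point_of P}" "P = convex hull {v. v extreme_point_of P}"
  using finite_polyhedron_extreme_points[OF polytope_imp_polyhedron[OF assms]]
    Krein_Milman_Minkowski[OF polytope_imp_compact[OF assms] polytope_imp_convex[OF assms]]
  by auto

lemma region_normal_fan_eq_vertex_cone:
  assumes P: "polytope P" and R: "R \<in> regions (normal_fan P)"
  obtains v where "v extreme_point_of P" "R = normal_cone P {v}"
proof -
  note V = polytope_extreme_points[OF P]
  obtain G where G: "G face_of P" "G \<noteq> {}" "R = normal_cone P G"
    using R regions_subset unfolding normal_fan_def by blast
  then have "G \<inter> {v. v extreme_point_of P} \<noteq> {}"
    using face_of_convex_hull_Int_nonempty[OF V(1)] V(2) by metis
  then obtain v where v: "v \<in> G" "v extreme_point_of P" by blast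
  have "{v} face_of P" using v(2) by (simp add: face_of_singleton)
  then have "normal_cone P {v} \<in> normal_fan P" unfolding normal_fan_def by blast
  moreover have "R \<subseteq> normal_cone P {v}" using G(3) v(1) unfolding normal_cone_def by blast
  ultimately show thesis using that v(2) region_maximal[OF R] by blast
qed

lemma span_Int_vertex_normal_cones:
  assumes P: "P = convex hull V" and uv: "u \<in> V" "v \<in> V" "u \<noteq> v"
    and wall: "is_wall (normal_cone P {u} \<inter> normal_cone P {v})"
  shows "span (normal_cone P {u} \<inter> normal_cone P {v}) = {x. inner (v - u) x = 0}"
proof (rule span_eq_hyperplane)
  show "0 \<in> normal_cone P {u} \<inter> normal_cone P {v}" by (simp add: normal_cone_def)
  show "v - u \<noteq> 0" using uv(3) by simp
  have "u \<in> P" "v \<in> P" unfolding P by (simp_all add: hull_inc uv)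
  show "normal_cone P {u} \<inter> normal_cone P {v} \<subseteq> {x. inner (v - u) x = 0}"
  proof
    fix x assume x: "x \<in> normal_cone P {u} \<inter> normal_cone P {v}"
    then have "inner x v \<le> inner x u" "inner x u \<le> inner x v"
      using normal_cone_vertex_iff[OF P \<open>u \<in> P\<close>] normal_cone_vertex_iff[OF P \<open>v \<in> P\<close>] uv(1,2)
      by blast+
    then show "x \<in> {x. inner (v - u) x = 0}"
      by (simp add: inner_diff_left inner_diff_right inner_commute)
  qed
qed (use wall in \<open>simp add: is_wall_def\<close>)

lemma wall_reflection_vertex_cones:
  assumes P: "P = convex hull V" and uv: "u \<in> V" "v \<in> V" "u \<noteq> v"
    and wall: "is_wall (normal_cone P {u} \<inter> normal_cone P {v})"
    and eq: "norm (u - c) = norm (v - c)"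
  shows "wall_reflection (normal_cone P {u}) (normal_cone P {v}) (v - c) = u - c"
  using span_Int_vertex_normal_cones[OF assms(1-5)] reflect_hyperplane_swap[of "v - c" "u - c"] eq
  unfolding wall_reflection_def by simp

text \<open>The normal cone of the whole polytope contains the lineality space, so every x in it is
  constant on the polytope and hence orthogonal to its affine hull.\<close>
lemma lineal_normal_fan_orthogonal:
  assumes P: "convex P" and V: "V \<subseteq> P" "v \<in> V" and c: "c \<in> affine hull V"
    and x: "x \<in> lineal (normal_fan P)"
  shows "inner x (v - c) = 0"
proof -
  have "normal_cone P P \<in> normal_fan P"
    using face_of_refl[OF P] V unfolding normal_fan_def by blast
  then have "x \<in> normal_cone P P" "- x \<in> normal_cone P P"
    using x unfolding lineal_def lineality_def by blast+
  then have "inner x y \<le> inner x v \<and> inner (- x) y \<le> inner (- x) v" if "y \<in> P" for y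
    using that V unfolding normal_cone_def by blast
  then have "\<forall>y\<in>P. inner x y = inner x v" by (simp add: order_antisym)
  then have "affine hull V \<subseteq> {y. inner x y = inner x v}"
    using V(1) by (intro hull_minimal) (auto simp: affine_hyperplane)
  then have "inner x c = inner x v" using c by blast
  then show ?thesis by (simp add: inner_diff_right)
qed

text \<open>Projecting the centre of a sphere through V onto the affine hull of V gives another centre.\<close>
lemma sphere_centre_in_affine_hull:
  fixes V :: "'a::euclidean_space set"
  assumes sph: "V \<subseteq> sphere c r" and v1: "v1 \<in> V"
  obtains c' where "c' \<in> affine hull V" "\<forall>u\<in>V. \<forall>v\<in>V. norm (u - c') = norm (v - c')"
proof -
  let ?S = "(\<lambda>v. - v1 + v) ` V"
  obtain y z where y: "y \<in> span ?S" and z: "\<And>w. w \<in> span ?S \<Longrightarrow> orthogonal z w"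
    and cz: "c - v1 = y + z"
    using orthogonal_subspace_decomp_exists by blast
  have "v1 + y \<in> affine hull V" using affine_hull_span_gen[OF hull_inc[OF v1]] y by blast
  moreover have "norm (v - (v1 + y)) ^ 2 = r ^ 2 - norm z ^ 2" if v: "v \<in> V" for v
  proof -
    have "v - (v1 + y) \<in> span ?S" using v y by (simp add: span_base span_diff diff_diff_eq[symmetric])
    then have "inner z (v - (v1 + y)) = 0" using z orthogonal_def by blast
    moreover have "norm ((v - (v1 + y)) - z) = r"
      using sph v cz by (auto simp: dist_norm norm_minus_commute algebra_simps)
    ultimately show ?thesis
      by (auto simp: power2_norm_eq_inner inner_diff_left inner_diff_right inner_commute)
  qed
  ultimately show thesis using that[of "v1 + y"] by (metis power2_eq_iff_nonneg norm_ge_zero)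
qed

lemma vertex_labelling_reflection_compatible:
  assumes F: "complete_fan F" and V: "finite V" "P = convex hull V"
    and vert: "\<And>R. R \<in> regions F \<Longrightarrow> vert R \<in> V \<and> R = normal_cone P {vert R}"
    and eq: "\<forall>u\<in>V. \<forall>v\<in>V. norm (u - c) = norm (v - c)"
  shows "reflection_compatible F (\<lambda>R. vert R - c)"
  unfolding reflection_compatible_def
proof (intro conjI ballI allI impI)
  fix R assume R: "R \<in> regions F"
  define v where "v = vert R"
  have v: "v \<in> V" "R = normal_cone P {v}" using vert[OF R] by (simp_all add: v_def)
  have "\<forall>u\<in>V. norm (u - c) = norm (v - c)" using eq v(1) by blast
  then have "v - c \<in> interior (normal_cone P {v})"
    by (rule equidistant_vertex_in_interior_normal_cone[OF V v(1)])
  then have "v - c \<in> interior R" using v(2) by simp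
  then show "vert R - c \<in> interior R" by (simp only: v_def)
next
  fix R R' assume adj: "adjacent F R R'"
  define u v where "u = vert R'" and "v = vert R"
  have uv: "u \<in> V" "v \<in> V" "R' = normal_cone P {u}" "R = normal_cone P {v}"
    using adj vert unfolding adjacent_def u_def v_def by blast+
  then have "u \<noteq> v" using adjacent_neq[OF F adj] by metis
  moreover have "is_wall (normal_cone P {u} \<inter> normal_cone P {v})"
    using adj uv(3,4) by (simp add: adjacent_def Int_commute)
  moreover have "norm (u - c) = norm (v - c)" using eq uv(1,2) by blast
  ultimately have "wall_reflection (normal_cone P {u}) (normal_cone P {v}) (v - c) = u - c"
    by (rule wall_reflection_vertex_cones[OF V(2) uv(1,2)])
  then show "wall_reflection R' R (vert R - c) = vert R' - c"
    unfolding uv(3,4)[symmetric] by (simp only: u_def v_def)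
qed

lemma inscribable_imp_reflection_compatible:
  fixes F :: "'a::euclidean_space set set"
  assumes F: "complete_fan F" and "inscribable F"
  obtains w where "reflection_compatible F w" "\<forall>R\<in>regions F. w R \<in> orthogonal_comp (lineal F)"
proof -
  obtain P c r where P: "polytope P" "normal_fan P = F"
    and sph: "{v. v extreme_point_of P} \<subseteq> sphere c r"
    using assms(2) unfolding inscribable_def inscribed_polytope_def by blast
  define V where "V = {v. v extreme_point_of P}"
  note V = polytope_extreme_points[OF P(1), folded V_def]
  have "\<exists>v. v \<in> V \<and> R = normal_cone P {v}" if "R \<in> regions F" for R
    using region_normal_fan_eq_vertex_cone[OF P(1)] that P(2) unfolding V_def by blast
  then obtain vert where vert: "\<And>R. R \<in> regions F \<Longrightarrow> vert R \<in> V \<and> R = normal_cone P {vert R}"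
    by metis
  obtain R1 where "R1 \<in> regions F" using ex_region_mem[OF F] by blast
  then obtain c' where c': "c' \<in> affine hull V" "\<forall>u\<in>V. \<forall>v\<in>V. norm (u - c') = norm (v - c')"
    using sphere_centre_in_affine_hull[OF sph[folded V_def], of "vert R1"] vert by blast
  have "vert R - c' \<in> orthogonal_comp (lineal F)" if "R \<in> regions F" for R
    using lineal_normal_fan_orthogonal[OF polytope_imp_convex[OF P(1)] _ _ c'(1)] vert[OF that]
      hull_subset[of V convex] V(2) P(2)
    unfolding orthogonal_comp_def orthogonal_def by blast
  then show thesis
    using that vertex_labelling_reflection_compatible[OF F V vert c'(2)] by blast
qed

lemma label_mem_InSpc:
  assumes w: "reflection_compatible F w" and orth: "w R0 \<in> orthogonal_comp (lineal F)"
  shows "w R0 \<in> InSpc F R0"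
  using walk_map_reflection_compatible[OF w] orth by (auto simp: InSpc_def closed_walk_at_def)

lemma label_not_in_lineal:
  assumes F: "complete_fan F" and w: "reflection_compatible F w" and R: "R \<in> regions F"
    and orth: "w R \<in> orthogonal_comp (lineal F)" and lin: "lineal F \<noteq> UNIV"
  shows "w R \<notin> lineal F"
proof
  assume "w R \<in> lineal F"
  then have "inner (w R) (w R) = 0" using orth by (simp add: orthogonal_comp_def orthogonal_def)
  then have "0 \<in> interior R" using reflection_compatibleD(1)[OF w R] by simp
  then show False using lineal_eq_UNIV_if_zero_in_interior[OF complete_fanD[OF F] R] lin by blast
qed

lemma reflection_compatible_path_label:
  assumes F: "complete_fan F" and w: "reflection_compatible F w"
    and Q: "Q \<in> regions F" and R: "R \<in> regions F"
  shows "\<exists>W. is_path F W \<and> hd W = Q \<and> last W = R \<and> walk_map W (w Q) \<in> interior R"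
proof -
  obtain W where W: "is_path F W" "hd W = Q" "last W = R"
    using reflection_compatible_path[OF F w Q R] .
  then have "walk_map W (w Q) = w R"
    using walk_map_reflection_compatible[OF w] by (auto simp: is_path_def)
  then show ?thesis using W reflection_compatibleD(1)[OF w R] by auto
qed

theorem proposition2p7:
  fixes F :: "'a::euclidean_space set set" and R0 :: "'a set"
  assumes "complete_fan F"
    and "R0 \<in> regions F"
    and "lineal F \<noteq> UNIV"
  shows "inscribable F \<longleftrightarrow>
           (virtually_inscribable F R0 \<and>
            (\<exists>v0\<in>InSpc F R0. \<forall>R\<in>regions F. \<exists>W.
                is_path F W \<and> hd W = R0 \<and> last W = R \<and> walk_map W v0 \<in> interior R))"
proof
  assume "inscribable F"
  then obtain w where w: "reflection_compatible F w"
    and orth: "\<forall>R\<in>regions F. w R \<in> orthogonal_comp (lineal F)"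
    using inscribable_imp_reflection_compatible[OF assms(1)] by blast
  have "w R0 \<in> InSpc F R0" using label_mem_InSpc[OF w] orth assms(2) by blast
  moreover have "w R0 \<notin> lineal F" using label_not_in_lineal[OF assms(1) w assms(2)] orth assms by blast
  moreover note reflection_compatible_path_label[OF assms(1) w assms(2)]
  ultimately show "virtually_inscribable F R0 \<and> (\<exists>v0\<in>InSpc F R0. \<forall>R\<in>regions F. \<exists>W.
      is_path F W \<and> hd W = R0 \<and> last W = R \<and> walk_map W v0 \<in> interior R)"
    unfolding virtually_inscribable_def by (auto simp: InSpc_def)
next
  assume "virtually_inscribable F R0 \<and> (\<exists>v0\<in>InSpc F R0. \<forall>R\<in>regions F. \<exists>W.
      is_path F W \<and> hd W = R0 \<and> last W = R \<and> walk_map W v0 \<in> interior R)"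
  then obtain v0 where "v0 \<in> InSpc F R0" and "\<forall>R\<in>regions F. \<exists>W.
      is_path F W \<and> hd W = R0 \<and> last W = R \<and> walk_map W v0 \<in> interior R"
    by blast
  then have "reflection_compatible F (transported_label F R0 v0)"
    by (rule transported_label_reflection_compatible)
  then show "inscribable F" by (rule reflection_compatible_imp_inscribable[OF assms(1)])
qed

end
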